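(* Let $\nu_1\le\nu_2$ be positive integers and let $T_1^{(1)},T_1^{(2)},T_2^{(1)},T_2^{(2)}$ be independent random variables with $T_i^{(j)}$ distributed as Student's $t$ with $\nu_i$ degrees of freedom ($i,j=1,2$). Then for every $h>0$, $$\mathbb{P}(T_1^{(1)}+T_1^{(2)}\le h)\le\mathbb{P}(T_2^{(1)}+T_2^{(2)}\le h).$$ *)

theory Defs
  imports "HOL-Probability.Probability"
begin

definition student_t_density :: "real \<Rightarrow> real \<Rightarrow> real" where
  "student_t_density nu x =
     Gamma ((nu + 1) / 2) / (sqrt (nu * pi) * Gamma (nu / 2)) *
     (1 + x\<^sup>2 / nu) powr (- (nu + 1) / 2)"

end

theory Submission
  imports Defs "HOL-Real_Asymp.Real_Asymp"
begin

text \<open>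
  Write \<open>f\<^sub>\<nu> = c\<^sub>\<nu> (1 + x\<^sup>2/\<nu>) powr (-(\<nu>+1)/2)\<close> for the t density and \<open>F\<^sub>\<nu>\<close> for its
  distribution function, and let \<open>\<nu>\<^sub>1 \<le> \<nu>\<^sub>2\<close>. Log-convexity of \<open>Gamma\<close> shows that
  \<open>\<psi>(x) = (Gamma (x+1/2) / Gamma x)\<^sup>4 (x+1/2) / x\<^sup>3\<close> satisfies \<open>\<psi>(x) \<le> \<psi>(x+1)\<close> and
  \<open>\<psi>(x) \<le> 1 + 1/(2x)\<close>, so \<open>\<psi> \<le> 1\<close>, which says exactly that \<open>c\<^sub>\<nu> \<le> c\<^sub>\<nu>\<^sub>+\<^sub>1\<close>. Moreover
  \<open>ln (f\<^sub>\<nu>\<^sub>2 / f\<^sub>\<nu>\<^sub>1)\<close>, as a function of \<open>x\<^sup>2\<close>, increases on \<open>[0,1]\<close> and decreases after.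
  Together, \<open>f\<^sub>\<nu>\<^sub>2 - f\<^sub>\<nu>\<^sub>1\<close> is even, has total mass 0 and changes sign at most once on
  \<open>[0,\<infinity>)\<close>, from \<open>+\<close> to \<open>-\<close>; hence \<open>G = F\<^sub>\<nu>\<^sub>2 - F\<^sub>\<nu>\<^sub>1\<close> is odd and nonnegative on \<open>[0,\<infinity>)\<close>.

  If \<open>X\<close> and \<open>Y\<close> are independent and \<open>X\<close> has density \<open>f\<close>, then
  \<open>P(X + Y \<le> h) = \<integral> f(x) F\<^sub>Y(h - x) dx\<close>. So it suffices that \<open>\<integral> f(x) G(h - x) dx \<ge> 0\<close>
  for \<open>h > 0\<close> and every integrable \<open>f\<close> decreasing in \<open>\<bar>x\<bar>\<close>; this follows by pairing \<open>x\<close> with its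
  mirror image \<open>2h - x\<close>. Replacing the law of one summand at a time then gives
  \<open>P(T\<^sub>1 + T\<^sub>1' \<le> h) \<le> P(T\<^sub>1 + T\<^sub>2 \<le> h) \<le> P(T\<^sub>2 + T\<^sub>2' \<le> h)\<close>.
\<close>

section \<open>The normalising constant\<close>

definition student_t_const :: "real \<Rightarrow> real" where
  "student_t_const nu = Gamma ((nu + 1) / 2) / (sqrt (nu * pi) * Gamma (nu / 2))"

lemma student_t_density_eq:
  "student_t_density nu x = student_t_const nu * (1 + x\<^sup>2 / nu) powr (- (nu + 1) / 2)"
  unfolding student_t_density_def student_t_const_def ..

lemma student_t_const_pos: "nu > 0 \<Longrightarrow> student_t_const nu > 0"
  unfolding student_t_const_def by (intro divide_pos_pos mult_pos_pos Gamma_real_pos) auto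

lemma Gamma_plus_half_sq_le:
  fixes z :: real
  assumes z: "z > 0"
  shows "Gamma (z + 1/2) ^ 2 \<le> z * Gamma z ^ 2"
proof -
  have pos: "Gamma z > 0" "Gamma (z + 1) > 0" "Gamma (z + 1/2) > 0"
    using z by auto
  have "(ln \<circ> Gamma) ((1 - 1/2) *\<^sub>R z + (1/2) *\<^sub>R (z + 1))
      \<le> (1 - 1/2) * (ln \<circ> Gamma) z + (1/2) * (ln \<circ> Gamma) (z + 1)"
    by (rule convex_onD[OF log_convex_Gamma_real]) (use z in auto)
  moreover have "(1 - 1/2) *\<^sub>R z + (1/2) *\<^sub>R (z + 1) = z + 1/2"
    by (simp add: field_simps)
  ultimately have "2 * ln (Gamma (z + 1/2)) \<le> ln (Gamma z * Gamma (z + 1))"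
    using pos by (simp add: ln_mult algebra_simps)
  then have "ln (Gamma (z + 1/2) ^ 2) \<le> ln (Gamma z * Gamma (z + 1))"
    using pos by (simp add: ln_realpow)
  then have "Gamma (z + 1/2) ^ 2 \<le> Gamma z * Gamma (z + 1)"
    using pos by simp
  moreover have "Gamma (z + 1) = z * Gamma z"
    using Gamma_plus1[of z] z nonpos_Ints_nonpos by force
  ultimately show ?thesis by (simp add: power2_eq_square algebra_simps)
qed

definition Gamma_quartic_ratio :: "real \<Rightarrow> real" where
  "Gamma_quartic_ratio x = (Gamma (x + 1/2) / Gamma x) ^ 4 * (x + 1/2) / x ^ 3"

lemma Gamma_quartic_ratio_le_asymp:
  assumes "x > 0"
  shows "Gamma_quartic_ratio x \<le> 1 + 1 / (2 * x)"
proof -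
  let ?R = "Gamma (x + 1/2) / Gamma x"
  have "?R ^ 2 \<le> x"
    using Gamma_plus_half_sq_le[OF assms] Gamma_real_pos[OF assms]
    by (simp add: field_simps)
  then have "?R ^ 4 \<le> x ^ 2"
    using power_mono[of "?R ^ 2" x 2] by (simp add: power_mult[symmetric])
  then have "?R ^ 4 * (x + 1/2) / x ^ 3 \<le> x ^ 2 * (x + 1/2) / x ^ 3"
    using assms by (intro divide_right_mono mult_right_mono) auto
  also have "\<dots> = 1 + 1 / (2 * x)"
    using assms by (simp add: field_simps power3_eq_cube power2_eq_square)
  finally show ?thesis by (simp add: Gamma_quartic_ratio_def)
qed

lemma Gamma_quartic_ratio_le_Suc:
  assumes x: "x > 0"
  shows "Gamma_quartic_ratio x \<le> Gamma_quartic_ratio (x + 1)"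
proof -
  let ?R = "Gamma (x + 1/2) / Gamma x"
  have "Gamma (x + 1 + 1/2) = (x + 1/2) * Gamma (x + 1/2)"
    using Gamma_plus1[of "x + 1/2"] x nonpos_Ints_nonpos by (force simp: add_ac)
  moreover have "Gamma (x + 1) = x * Gamma x"
    using Gamma_plus1[of x] x nonpos_Ints_nonpos by force
  ultimately have ratio_Suc: "Gamma (x + 1 + 1/2) / Gamma (x + 1) = ?R * ((x + 1/2) / x)"
    by (simp add: ac_simps)
  have "(x + 1/2) ^ 3 * (x + 3/2) - x * (x + 1) ^ 3 = x / 4 + 3 / 16"
    by (simp add: power3_eq_cube field_simps)
  then have "x * (x + 1) ^ 3 \<le> (x + 1/2) ^ 3 * (x + 3/2)"
    using x by linarith
  then have ge1: "1 \<le> (x + 1/2) ^ 3 * (x + 3/2) / (x * (x + 1) ^ 3)"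
    using x by simp
  have "(x + 1/2) / x ^ 3
      \<le> (x + 1/2) / x ^ 3 * ((x + 1/2) ^ 3 * (x + 3/2) / (x * (x + 1) ^ 3))"
    using mult_left_mono[OF ge1, of "(x + 1/2) / x ^ 3"] x by simp
  also have "\<dots> = ((x + 1/2) / x) ^ 4 * (x + 1 + 1/2) / (x + 1) ^ 3"
    using x by (simp add: field_simps power_Suc[symmetric] del: power_Suc)
  finally have "(x + 1/2) / x ^ 3 \<le> ((x + 1/2) / x) ^ 4 * (x + 1 + 1/2) / (x + 1) ^ 3" .
  then have mono: "?R ^ 4 * ((x + 1/2) / x ^ 3) \<le> ?R ^ 4 * (((x + 1/2) / x) ^ 4 * (x + 1 + 1/2) / (x + 1) ^ 3)"
    by (rule mult_left_mono) simp
  have lhs: "Gamma_quartic_ratio x = ?R ^ 4 * ((x + 1/2) / x ^ 3)"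
    unfolding Gamma_quartic_ratio_def by (simp only: times_divide_eq_right)
  have rhs: "Gamma_quartic_ratio (x + 1)
      = ?R ^ 4 * (((x + 1/2) / x) ^ 4 * (x + 1 + 1/2) / (x + 1) ^ 3)"
    unfolding Gamma_quartic_ratio_def ratio_Suc power_mult_distrib
    by (simp only: mult.assoc times_divide_eq_right)
  show ?thesis
    using mono unfolding lhs rhs .
qed

lemma Gamma_quartic_ratio_le_1:
  assumes x: "x > 0"
  shows "Gamma_quartic_ratio x \<le> 1"
proof (rule LIMSEQ_le_const)
  have "Gamma_quartic_ratio x \<le> Gamma_quartic_ratio (x + real n)" for n
  proof (induction n)
    case (Suc n)
    then show ?case
      using Gamma_quartic_ratio_le_Suc[of "x + real n"] x by (simp add: add_ac)
  qed simp
  then show "\<exists>N. \<forall>n\<ge>N. Gamma_quartic_ratio x \<le> 1 + 1 / (2 * (x + real n))"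
    using Gamma_quartic_ratio_le_asymp x by (meson add_pos_nonneg of_nat_0_le_iff order_trans)
  show "(\<lambda>n. 1 + 1 / (2 * (x + real n))) \<longlonglongrightarrow> 1"
    by real_asymp
qed

lemma student_t_const_le_Suc:
  assumes nu: "nu > 0"
  shows "student_t_const nu \<le> student_t_const (nu + 1)"
proof -
  define x where "x = nu / 2"
  have x: "x > 0" and nu_eq: "nu = 2 * x"
    using nu by (simp_all add: x_def)
  define R where "R = Gamma (x + 1/2) / Gamma x"
  have R: "R > 0"
    using x by (simp add: R_def)
  have "Gamma (x + 1) = x * Gamma x"
    using Gamma_plus1[of x] x nonpos_Ints_nonpos by force
  then have const_eqs: "student_t_const nu = R / sqrt (2 * x * pi)"
      "student_t_const (nu + 1) = x / (sqrt ((2 * x + 1) * pi) * R)"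
    using x by (simp_all add: student_t_const_def R_def nu_eq add_divide_distrib add.commute)
  have "R ^ 4 * (x + 1/2) \<le> x ^ 3"
    using Gamma_quartic_ratio_le_1[OF x] x by (simp add: Gamma_quartic_ratio_def R_def divide_le_eq)
  then have "(R\<^sup>2 * sqrt (2 * x + 1))\<^sup>2 \<le> (x * sqrt (2 * x))\<^sup>2"
    using x by (simp add: power2_eq_square power4_eq_xxxx power3_eq_cube algebra_simps)
  then have "R\<^sup>2 * sqrt (2 * x + 1) \<le> x * sqrt (2 * x)"
    by (rule power2_le_imp_le) (use x in simp)
  then have "R\<^sup>2 * sqrt (2 * x + 1) * sqrt pi \<le> x * sqrt (2 * x) * sqrt pi"
    by (rule mult_right_mono) simp
  then have "R * (sqrt ((2 * x + 1) * pi) * R) \<le> x * sqrt (2 * x * pi)"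
    by (simp add: real_sqrt_mult power2_eq_square mult_ac)
  then show ?thesis
    unfolding const_eqs using x R by (simp add: divide_simps)
qed

lemma student_t_const_mono:
  assumes "0 < n" "n \<le> m"
  shows "student_t_const (real n) \<le> student_t_const (real m)"
  using assms(2)
proof (induction m rule: dec_induct)
  case (step k)
  have "student_t_const (real k) \<le> student_t_const (real (Suc k))"
    using student_t_const_le_Suc[of "real k"] step assms by (simp add: add.commute)
  then show ?case
    using step.IH by linarith
qed simp

section \<open>Shape of the densities\<close>

lemma student_t_density_pos:
  assumes "nu > 0"
  shows "student_t_density nu x > 0"
proof -
  have "1 + x\<^sup>2 / nu > 0"
    using assms by (simp add: add_pos_nonneg)
  then show ?thesis
    using student_t_const_pos[OF assms] by (simp add: student_t_density_eq)
qed

lemma student_t_density_minus: "student_t_density nu (- x) = student_t_density nu x"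
  by (simp add: student_t_density_def)

lemma student_t_density_antimono:
  assumes nu: "nu > 0" and xy: "\<bar>x\<bar> \<le> \<bar>y\<bar>"
  shows "student_t_density nu y \<le> student_t_density nu x"
proof -
  have "1 + x\<^sup>2 / nu \<le> 1 + y\<^sup>2 / nu"
    using xy nu by (simp add: abs_le_square_iff divide_right_mono)
  then have "(1 + y\<^sup>2 / nu) powr (- (nu + 1) / 2) \<le> (1 + x\<^sup>2 / nu) powr (- (nu + 1) / 2)"
    using nu by (intro powr_mono2') (auto intro: add_pos_nonneg)
  then show ?thesis
    unfolding student_t_density_eq using student_t_const_pos[OF nu] by (intro mult_left_mono) auto
qed

lemma ln_student_t_density:
  assumes "nu > 0"
  shows "ln (student_t_density nu x) = ln (student_t_const nu) - (nu + 1) / 2 * ln (1 + x\<^sup>2 / nu)"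
proof -
  have "1 + x\<^sup>2 / nu > 0"
    using assms by (simp add: add_pos_nonneg)
  then show ?thesis
    using student_t_const_pos[OF assms]
    by (simp add: student_t_density_eq ln_mult) (simp add: field_simps)
qed

text \<open>\<open>ln (student_t_density b x / student_t_density a x)
  = ln (student_t_const b / student_t_const a) + student_t_log_ratio a b (x\<^sup>2)\<close>\<close>

definition student_t_log_ratio :: "real \<Rightarrow> real \<Rightarrow> real \<Rightarrow> real" where
  "student_t_log_ratio a b u = (a + 1) / 2 * ln (1 + u / a) - (b + 1) / 2 * ln (1 + u / b)"

lemma student_t_log_ratio_has_real_derivative:
  assumes "0 < a" "0 < b" "0 \<le> u"
  shows "(student_t_log_ratio a b has_real_derivative
           (b - a) * (1 - u) / (2 * (a + u) * (b + u))) (at u)"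
proof -
  have ln_deriv: "((\<lambda>u. ln (1 + u / c)) has_real_derivative 1 / (c + u)) (at u)" if c: "c > 0" for c
  proof -
    have "1 + u / c > 0"
      using c assms by (simp add: add_pos_nonneg)
    then show ?thesis
      using c by (auto intro!: derivative_eq_intros simp: field_simps)
  qed
  have "(student_t_log_ratio a b has_real_derivative
          (a + 1) / 2 * (1 / (a + u)) - (b + 1) / 2 * (1 / (b + u))) (at u)"
    unfolding student_t_log_ratio_def[abs_def] by (intro DERIV_diff DERIV_cmult ln_deriv assms)
  moreover have "(a + 1) / 2 * (1 / (a + u)) - (b + 1) / 2 * (1 / (b + u))
      = (b - a) * (1 - u) / (2 * (a + u) * (b + u))"
    using assms by (simp add: add_pos_nonneg divide_simps) (simp add: algebra_simps)
  ultimately show ?thesis by simp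
qed

lemma student_t_log_ratio_mono_le_1:
  assumes "0 < a" "a \<le> b" "0 \<le> u" "u \<le> v" "v \<le> 1"
  shows "student_t_log_ratio a b u \<le> student_t_log_ratio a b v"
proof (rule DERIV_nonneg_imp_nondecreasing[OF \<open>u \<le> v\<close>])
  fix w
  assume "u \<le> w" "w \<le> v"
  then show "\<exists>y. DERIV (student_t_log_ratio a b) w :> y \<and> 0 \<le> y"
    using assms
    by (intro exI[of _ "(b - a) * (1 - w) / (2 * (a + w) * (b + w))"] conjI
        student_t_log_ratio_has_real_derivative divide_nonneg_pos mult_nonneg_nonneg) auto
qed

lemma student_t_log_ratio_antimono_ge_1:
  assumes "0 < a" "a \<le> b" "1 \<le> u" "u \<le> v"
  shows "student_t_log_ratio a b v \<le> student_t_log_ratio a b u"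
proof (rule DERIV_nonpos_imp_nonincreasing[OF \<open>u \<le> v\<close>])
  fix w
  assume "u \<le> w" "w \<le> v"
  then show "\<exists>y. DERIV (student_t_log_ratio a b) w :> y \<and> y \<le> 0"
    using assms
    by (intro exI[of _ "(b - a) * (1 - w) / (2 * (a + w) * (b + w))"] conjI
        student_t_log_ratio_has_real_derivative divide_nonpos_pos mult_nonneg_nonpos) auto
qed

lemma student_t_density_single_crossing:
  assumes a: "0 < a" and ab: "a \<le> b" and const: "student_t_const a \<le> student_t_const b"
    and xy: "\<bar>x\<bar> \<le> \<bar>y\<bar>" and le_y: "student_t_density a y \<le> student_t_density b y"
  shows "student_t_density a x \<le> student_t_density b x"
proof -
  have b: "0 < b"
    using a ab by simp
  have le_iff: "student_t_density a z \<le> student_t_density b z \<longleftrightarrow>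
      ln (student_t_const a) - ln (student_t_const b) \<le> student_t_log_ratio a b (z\<^sup>2)" for z
  proof -
    have "student_t_density a z \<le> student_t_density b z \<longleftrightarrow>
        ln (student_t_density a z) \<le> ln (student_t_density b z)"
      using student_t_density_pos[OF a] student_t_density_pos[OF b] by simp
    then show ?thesis
      unfolding ln_student_t_density[OF a] ln_student_t_density[OF b] student_t_log_ratio_def
      by linarith
  qed
  have const_ln: "ln (student_t_const a) - ln (student_t_const b) \<le> 0"
    using const student_t_const_pos[OF a] by simp
  show ?thesis
  proof (cases "x\<^sup>2 \<le> 1")
    case True
    then have "student_t_log_ratio a b 0 \<le> student_t_log_ratio a b (x\<^sup>2)"
      using a ab by (intro student_t_log_ratio_mono_le_1) auto
    then show ?thesis
      using le_iff const_ln by (simp add: student_t_log_ratio_def)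
  next
    case False
    moreover have "x\<^sup>2 \<le> y\<^sup>2"
      using xy by (simp add: abs_le_square_iff)
    ultimately have "student_t_log_ratio a b (y\<^sup>2) \<le> student_t_log_ratio a b (x\<^sup>2)"
      using a ab by (intro student_t_log_ratio_antimono_ge_1) auto
    then show ?thesis
      using le_iff le_y by (meson order_trans)
  qed
qed

section \<open>A convolution inequality\<close>

lemma integrable_mult_bounded:
  fixes f g :: "'a \<Rightarrow> real"
  assumes f: "integrable M f" and g: "g \<in> borel_measurable M" and bound: "\<And>x. \<bar>g x\<bar> \<le> B"
  shows "integrable M (\<lambda>x. f x * g x)"
proof (rule Bochner_Integration.integrable_bound[where f = "\<lambda>x. B * f x"])
  show "integrable M (\<lambda>x. B * f x)"
    using f by simp
  show "(\<lambda>x. f x * g x) \<in> borel_measurable M"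
    using f g by measurable
  show "AE x in M. norm (f x * g x) \<le> norm (B * f x)"
  proof (intro AE_I2)
    fix x
    have "\<bar>f x\<bar> * \<bar>g x\<bar> \<le> \<bar>f x\<bar> * \<bar>B\<bar>"
      using bound[of x] by (intro mult_left_mono) auto
    then show "norm (f x * g x) \<le> norm (B * f x)"
      by (simp add: abs_mult mult.commute)
  qed
qed

definition cum_integral :: "(real \<Rightarrow> real) \<Rightarrow> real \<Rightarrow> real" where
  "cum_integral g t = (LINT y|lborel. g y * indicator {..t} y)"

lemma cum_integral_nonneg: "(\<And>x. 0 \<le> g x) \<Longrightarrow> 0 \<le> cum_integral g t"
  unfolding cum_integral_def by (auto intro!: integral_nonneg_AE)

lemma cum_integral_mono:
  assumes "integrable lborel g" "\<And>x. 0 \<le> g x" "s \<le> t"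
  shows "cum_integral g s \<le> cum_integral g t"
  unfolding cum_integral_def using assms
  by (auto intro!: integral_mono integrable_real_mult_indicator split: split_indicator)

lemma cum_integral_le_integral:
  assumes "integrable lborel g" "\<And>x. 0 \<le> g x"
  shows "cum_integral g t \<le> integral\<^sup>L lborel g"
  unfolding cum_integral_def using assms
  by (auto intro!: integral_mono integrable_real_mult_indicator split: split_indicator)

lemma borel_measurable_cum_integral:
  assumes "integrable lborel g" "\<And>x. 0 \<le> g x"
  shows "cum_integral g \<in> borel_measurable borel"
  using assms by (intro borel_measurable_mono) (auto simp: mono_def cum_integral_mono)

lemma cum_integral_diff:
  assumes "integrable lborel f" "integrable lborel g"
  shows "cum_integral (\<lambda>x. f x - g x) t = cum_integral f t - cum_integral g t"
  unfolding cum_integral_def left_diff_distrib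
  using assms by (intro Bochner_Integration.integral_diff integrable_real_mult_indicator) auto

lemma cum_integral_add_upper:
  assumes "integrable lborel g"
  shows "cum_integral g t + (LINT x|lborel. g x * indicator {t<..} x) = integral\<^sup>L lborel g"
proof -
  have "cum_integral g t + (LINT x|lborel. g x * indicator {t<..} x)
      = (LINT x|lborel. g x * indicator {..t} x + g x * indicator {t<..} x)"
    unfolding cum_integral_def
    using assms by (intro Bochner_Integration.integral_add[symmetric] integrable_real_mult_indicator) auto
  also have "\<dots> = integral\<^sup>L lborel g"
    by (intro Bochner_Integration.integral_cong) (auto split: split_indicator)
  finally show ?thesis .
qed

lemma cum_integral_minus_even:
  assumes int: "integrable lborel D" and zero: "integral\<^sup>L lborel D = 0"
    and even: "\<And>x. D (- x) = D x"
  shows "cum_integral D (- t) = - cum_integral D t"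
proof -
  have "cum_integral D (- t) = (LINT x|lborel. D (- x) * indicator {..- t} (- x))"
    unfolding cum_integral_def using lborel_integral_real_affine[of "-1" _ 0] by simp
  also have "\<dots> = (LINT x|lborel. D x * indicator {t<..} x)"
  proof (rule integral_cong_AE)
    show "AE x in lborel. D (- x) * indicator {..- t} (- x) = D x * indicator {t<..} x"
      using AE_lborel_singleton[of t] by eventually_elim (auto simp: even split: split_indicator)
  qed (use int in \<open>auto intro!: borel_measurable_integrable\<close>)
  also have "\<dots> = - cum_integral D t"
    using cum_integral_add_upper[OF int, of t] zero by simp
  finally show ?thesis .
qed

lemma cum_integral_nonneg_single_crossing:
  assumes int: "integrable lborel D" and zero: "integral\<^sup>L lborel D = 0"
    and even: "\<And>x. D (- x) = D x"
    and crossing: "\<And>x y. \<bar>x\<bar> \<le> \<bar>y\<bar> \<Longrightarrow> 0 \<le> D y \<Longrightarrow> 0 \<le> D x"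
    and t: "0 \<le> t"
  shows "0 \<le> cum_integral D t"
proof (cases "0 \<le> D t")
  case True
  have "cum_integral D t - cum_integral D (- t) = (LINT x|lborel. D x * indicator {- t<..t} x)"
    unfolding cum_integral_def using int t
    by (subst Bochner_Integration.integral_diff[symmetric])
      (auto intro!: integrable_real_mult_indicator Bochner_Integration.integral_cong split: split_indicator)
  moreover have "0 \<le> (LINT x|lborel. D x * indicator {- t<..t} x)"
    using crossing[of _ t] True t
    by (intro integral_nonneg_AE AE_I2) (auto split: split_indicator)
  moreover have "cum_integral D (- t) = - cum_integral D t"
    using int zero even by (rule cum_integral_minus_even)
  ultimately show ?thesis
    by linarith
next
  case False
  then have "D x \<le> 0" if "t < x" for x
    using crossing[of t x] t that by fastforce
  then have "(LINT x|lborel. D x * indicator {t<..} x) \<le> 0"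
    using integral_nonneg_AE[of "\<lambda>x. - (D x * indicator {t<..} x)" lborel]
    by (auto split: split_indicator)
  then show ?thesis
    using cum_integral_add_upper[OF int, of t] zero by simp
qed

lemma integral_unimodal_mult_odd_nonneg:
  fixes f G :: "real \<Rightarrow> real"
  assumes f: "integrable lborel f"
    and unimodal: "\<And>x y. \<bar>x\<bar> \<le> \<bar>y\<bar> \<Longrightarrow> f y \<le> f x"
    and G: "G \<in> borel_measurable borel" and bound: "\<And>t. \<bar>G t\<bar> \<le> B"
    and odd: "\<And>t. G (- t) = - G t" and nonneg: "\<And>t. 0 \<le> t \<Longrightarrow> 0 \<le> G t"
    and h: "0 < h"
  shows "0 \<le> (LINT x|lborel. f x * G (h - x))"
proof -
  let ?I = "LINT x|lborel. f x * G (h - x)"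
  let ?J = "LINT x|lborel. f (2 * h - x) * G (h - x)"
  have G_shift: "(\<lambda>x. G (h - x)) \<in> borel_measurable lborel"
    using G by measurable
  have int_I: "integrable lborel (\<lambda>x. f x * G (h - x))"
    using f G_shift bound by (rule integrable_mult_bounded)
  have "integrable lborel (\<lambda>x. f (2 * h - x))"
    using lborel_integrable_real_affine[OF f, of "-1" "2 * h"] by simp
  then have int_J: "integrable lborel (\<lambda>x. f (2 * h - x) * G (h - x))"
    using G_shift bound by (rule integrable_mult_bounded)
  txt \<open>The substitution \<open>x \<mapsto> 2h - x\<close> and oddness of \<open>G\<close>; afterwards the integrand
    of \<open>?I - ?J\<close> is pointwise nonnegative by unimodality of \<open>f\<close>.\<close>
  have reflected: "?I = - ?J"
    using lborel_integral_real_affine[of "-1" "\<lambda>x. f x * G (h - x)" "2 * h"]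
      odd[of "h - x" for x] by (simp add: algebra_simps)
  have "0 \<le> (LINT x|lborel. f x * G (h - x) - f (2 * h - x) * G (h - x))"
  proof (intro integral_nonneg_AE AE_I2)
    fix x
    show "0 \<le> f x * G (h - x) - f (2 * h - x) * G (h - x)"
    proof (cases "x \<le> h")
      case True
      then have "f (2 * h - x) \<le> f x" "0 \<le> G (h - x)"
        using h by (auto intro!: unimodal nonneg)
      then show ?thesis
        by (simp add: mult_right_mono)
    next
      case False
      then have "f x \<le> f (2 * h - x)" "G (h - x) \<le> 0"
        using h nonneg[of "x - h"] odd[of "x - h"] by (auto intro!: unimodal)
      then show ?thesis
        by (simp add: mult_right_mono_neg)
    qed
  qed
  also have "\<dots> = ?I - ?J"
    using int_I int_J by (rule Bochner_Integration.integral_diff)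
  finally show ?thesis
    using reflected by simp
qed

lemma integral_mult_cum_integral_mono:
  fixes f f\<^sub>1 f\<^sub>2 :: "real \<Rightarrow> real"
  assumes f: "integrable lborel f"
    and unimodal: "\<And>x y. \<bar>x\<bar> \<le> \<bar>y\<bar> \<Longrightarrow> f y \<le> f x"
    and int1: "integrable lborel f\<^sub>1" and int2: "integrable lborel f\<^sub>2"
    and nonneg1: "\<And>x. 0 \<le> f\<^sub>1 x" and nonneg2: "\<And>x. 0 \<le> f\<^sub>2 x"
    and same_mass: "integral\<^sup>L lborel f\<^sub>1 = integral\<^sup>L lborel f\<^sub>2"
    and even1: "\<And>x. f\<^sub>1 (- x) = f\<^sub>1 x" and even2: "\<And>x. f\<^sub>2 (- x) = f\<^sub>2 x"
    and crossing: "\<And>x y. \<bar>x\<bar> \<le> \<bar>y\<bar> \<Longrightarrow> f\<^sub>1 y \<le> f\<^sub>2 y \<Longrightarrow> f\<^sub>1 x \<le> f\<^sub>2 x"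
    and h: "0 < h"
  shows "(LINT x|lborel. f x * cum_integral f\<^sub>1 (h - x)) \<le> (LINT x|lborel. f x * cum_integral f\<^sub>2 (h - x))"
proof -
  define D where "D = (\<lambda>x. f\<^sub>2 x - f\<^sub>1 x)"
  have int_D: "integrable lborel D" and zero_D: "integral\<^sup>L lborel D = 0"
    using int1 int2 same_mass by (auto simp: D_def)
  have cum_integral_D: "cum_integral D t = cum_integral f\<^sub>2 t - cum_integral f\<^sub>1 t" for t
    unfolding D_def using int2 int1 by (rule cum_integral_diff)
  have meas1: "cum_integral f\<^sub>1 \<in> borel_measurable borel"
    and meas2: "cum_integral f\<^sub>2 \<in> borel_measurable borel"
    using int1 int2 nonneg1 nonneg2 by (simp_all add: borel_measurable_cum_integral)
  have bound: "\<bar>cum_integral D t\<bar> \<le> integral\<^sup>L lborel f\<^sub>2" for t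
    using cum_integral_nonneg[of f\<^sub>1 t, OF nonneg1] cum_integral_nonneg[of f\<^sub>2 t, OF nonneg2]
      cum_integral_le_integral[OF int1 nonneg1, of t] cum_integral_le_integral[OF int2 nonneg2, of t]
      same_mass
    unfolding cum_integral_D by linarith
  have "0 \<le> (LINT x|lborel. f x * cum_integral D (h - x))"
  proof (rule integral_unimodal_mult_odd_nonneg[OF f unimodal _ bound _ _ h])
    show "cum_integral D \<in> borel_measurable borel"
      unfolding cum_integral_D[abs_def] using meas1 meas2 by measurable
    show "cum_integral D (- t) = - cum_integral D t" for t
      using int_D zero_D by (rule cum_integral_minus_even) (simp add: D_def even1 even2)
    show "0 \<le> cum_integral D t" if "0 \<le> t" for t
      using int_D zero_D _ _ that
      by (rule cum_integral_nonneg_single_crossing) (auto simp: D_def even1 even2 crossing)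
  qed
  also have "\<dots> = (LINT x|lborel. f x * cum_integral f\<^sub>2 (h - x)) - (LINT x|lborel. f x * cum_integral f\<^sub>1 (h - x))"
    unfolding cum_integral_D right_diff_distrib
    using f meas1 meas2 cum_integral_nonneg nonneg1 nonneg2
      cum_integral_le_integral[OF int1 nonneg1] cum_integral_le_integral[OF int2 nonneg2]
    by (intro Bochner_Integration.integral_diff integrable_mult_bounded[where B = "integral\<^sup>L lborel f\<^sub>2"])
      (auto simp: same_mass)
  finally show ?thesis
    by simp
qed

lemma integral_mult_cum_integral_student_t_mono:
  fixes f :: "real \<Rightarrow> real" and a b :: nat
  assumes a: "0 < a" and ab: "a \<le> b"
    and int_a: "integrable lborel (student_t_density a)"
    and int_b: "integrable lborel (student_t_density b)"
    and same_mass: "integral\<^sup>L lborel (student_t_density a) = integral\<^sup>L lborel (student_t_density b)"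
    and f: "integrable lborel f" and unimodal: "\<And>x y. \<bar>x\<bar> \<le> \<bar>y\<bar> \<Longrightarrow> f y \<le> f x"
    and h: "0 < h"
  shows "(LINT x|lborel. f x * cum_integral (student_t_density a) (h - x))
    \<le> (LINT x|lborel. f x * cum_integral (student_t_density b) (h - x))"
proof (rule integral_mult_cum_integral_mono[OF f unimodal int_a int_b _ _ same_mass _ _ _ h])
  show "\<And>x y. \<bar>x\<bar> \<le> \<bar>y\<bar> \<Longrightarrow> student_t_density a y \<le> student_t_density b y
      \<Longrightarrow> student_t_density a x \<le> student_t_density b x"
    using student_t_density_single_crossing[OF _ _ student_t_const_mono[OF a ab]] a ab by simp
qed (use a ab in \<open>simp_all add: student_t_density_minus less_imp_le student_t_density_pos\<close>)

section \<open>Sums of independent variables with densities\<close>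

lemma (in prob_space) distributed_density_integral_eq_1:
  assumes X: "distributed M lborel X (\<lambda>x. ennreal (f x))" and f: "\<And>x. 0 \<le> f x"
  shows "integrable lborel f" "integral\<^sup>L lborel f = 1"
proof -
  show "integrable lborel f"
    using distributed_integrable[OF X, of "\<lambda>_. 1"] f by simp
  show "integral\<^sup>L lborel f = 1"
    using distributed_integral[OF X, of "\<lambda>_. 1"] f by (simp add: prob_space)
qed

lemma (in prob_space) emeasure_distr_atMost_eq_cum_integral:
  assumes Y: "distributed M lborel Y (\<lambda>x. ennreal (g x))" and g: "\<And>x. 0 \<le> g x"
  shows "emeasure (distr M borel Y) {..t} = ennreal (cum_integral g t)"
proof -
  have "emeasure (distr M borel Y) {..t} = emeasure M (Y -` {..t} \<inter> space M)"
    using Y by (intro emeasure_distr) (auto dest: distributed_measurable)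
  also have "\<dots> = (\<integral>\<^sup>+y. ennreal (g y) * indicator {..t} y \<partial>lborel)"
    using distributed_emeasure[OF Y, of "{..t}"] by simp
  also have "\<dots> = (\<integral>\<^sup>+y. ennreal (g y * indicator {..t} y) \<partial>lborel)"
    by (intro nn_integral_cong) (auto split: split_indicator)
  also have "\<dots> = ennreal (cum_integral g t)"
    unfolding cum_integral_def using distributed_density_integral_eq_1(1)[OF Y g] g
    by (intro nn_integral_eq_integral integrable_real_mult_indicator) auto
  finally show ?thesis .
qed

lemma (in prob_space) indep_vars_imp_indep_var:
  fixes X :: "'i \<Rightarrow> 'a \<Rightarrow> real"
  assumes indep: "indep_vars (\<lambda>_. borel) X I" and "i \<in> I" "j \<in> I" "i \<noteq> j"
  shows "indep_var borel (X i) borel (X j)"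
proof -
  have "indep_vars (\<lambda>_. borel) X (insert i {j})"
    using assms by (intro indep_vars_subset[OF indep]) auto
  then have "indep_var borel (X i) borel (\<lambda>\<omega>. \<Sum>k\<in>{j}. X k \<omega>)"
    using assms by (intro indep_vars_sum) auto
  then show ?thesis
    by simp
qed

lemma (in prob_space) measure_indep_add_le:
  assumes indep: "indep_var borel X borel Y"
    and X: "distributed M lborel X (\<lambda>x. ennreal (f x))" and f: "\<And>x. 0 \<le> f x"
    and Y: "distributed M lborel Y (\<lambda>x. ennreal (g x))" and g: "\<And>x. 0 \<le> g x"
  shows "measure M {\<omega> \<in> space M. X \<omega> + Y \<omega> \<le> h} = (LINT x|lborel. f x * cum_integral g (h - x))"
proof -
  let ?S = "{p :: real \<times> real. fst p + snd p \<le> h}"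
  have "{p \<in> space (borel \<Otimes>\<^sub>M borel). fst p + snd p \<le> h} \<in> sets (borel \<Otimes>\<^sub>M borel)"
    by measurable
  then have S: "?S \<in> sets (borel \<Otimes>\<^sub>M borel)"
    by (simp add: space_pair_measure)
  have rv: "random_variable borel X" "random_variable borel Y"
    using indep by (auto dest: indep_var_rv1 indep_var_rv2)
  have distr_X: "distr M borel X = density lborel (\<lambda>x. ennreal (f x))"
    using distributed_distr_eq_density[OF X] by (metis distr_cong sets_lborel)
  interpret Y: prob_space "distr M borel Y"
    using rv(2) by (rule prob_space_distr)
  note g_mass = distributed_density_integral_eq_1[OF Y g]
  have cum_meas[measurable]: "cum_integral g \<in> borel_measurable borel"
    using g_mass(1) g by (rule borel_measurable_cum_integral)
  have int_cum: "integrable lborel (\<lambda>x. f x * cum_integral g (h - x))"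
  proof (rule integrable_mult_bounded[where B = 1])
    show "integrable lborel f"
      using X f by (rule distributed_density_integral_eq_1)
    show "\<bar>cum_integral g (h - x)\<bar> \<le> 1" for x
      using cum_integral_nonneg[OF g] cum_integral_le_integral[OF g_mass(1) g] g_mass(2) by simp
  qed measurable
  have "emeasure M {\<omega> \<in> space M. X \<omega> + Y \<omega> \<le> h}
      = emeasure (distr M (borel \<Otimes>\<^sub>M borel) (\<lambda>\<omega>. (X \<omega>, Y \<omega>))) ?S"
    using rv S by (subst emeasure_distr) (auto intro!: arg_cong[where f = "emeasure M"])
  also have "\<dots> = emeasure (distr M borel X \<Otimes>\<^sub>M distr M borel Y) ?S"
    using indep by (simp add: indep_var_distribution_eq)
  also have "\<dots> = (\<integral>\<^sup>+x. emeasure (distr M borel Y) {..h - x} \<partial>distr M borel X)"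
    using Y.emeasure_pair_measure_alt[of ?S "distr M borel X"] S
    by (simp add: vimage_def atMost_def le_diff_eq add.commute cong: sets_pair_measure_cong)
  also have "\<dots> = (\<integral>\<^sup>+x. ennreal (f x * cum_integral g (h - x)) \<partial>lborel)"
    unfolding distr_X emeasure_distr_atMost_eq_cum_integral[OF Y g]
    using f cum_integral_nonneg[OF g] distributed_borel_measurable[OF X]
    by (subst nn_integral_density) (auto simp: ennreal_mult)
  also have "\<dots> = ennreal (LINT x|lborel. f x * cum_integral g (h - x))"
    using int_cum f cum_integral_nonneg[OF g] by (intro nn_integral_eq_integral) auto
  finally show ?thesis
    using f cum_integral_nonneg[OF g] by (simp add: emeasure_eq_measure integral_nonneg_AE)
qed

theorem lemma4:
  fixes M :: "'a measure" and T :: "nat \<times> nat \<Rightarrow> 'a \<Rightarrow> real"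
    and \<nu>\<^sub>1 \<nu>\<^sub>2 :: nat and h :: real
  assumes "prob_space M"
    and "0 < \<nu>\<^sub>1" and "\<nu>\<^sub>1 \<le> \<nu>\<^sub>2"
    and "prob_space.indep_vars M (\<lambda>_. borel) T ({1, 2} \<times> {1, 2})"
    and "\<And>j. j \<in> {1, 2} \<Longrightarrow>
           distributed M lborel (T (1, j)) (\<lambda>x. ennreal (student_t_density (real \<nu>\<^sub>1) x))"
    and "\<And>j. j \<in> {1, 2} \<Longrightarrow>
           distributed M lborel (T (2, j)) (\<lambda>x. ennreal (student_t_density (real \<nu>\<^sub>2) x))"
    and "0 < h"
  shows "measure M {\<omega> \<in> space M. T (1, 1) \<omega> + T (1, 2) \<omega> \<le> h}
         \<le> measure M {\<omega> \<in> space M. T (2, 1) \<omega> + T (2, 2) \<omega> \<le> h}"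
proof -
  interpret prob_space M by fact
  define f\<^sub>1 where "f\<^sub>1 = student_t_density (real \<nu>\<^sub>1)"
  define f\<^sub>2 where "f\<^sub>2 = student_t_density (real \<nu>\<^sub>2)"
  have pos: "0 < real \<nu>\<^sub>1" "0 < real \<nu>\<^sub>2"
    using assms(2,3) by simp_all
  have nonneg: "\<And>x. 0 \<le> f\<^sub>1 x" "\<And>x. 0 \<le> f\<^sub>2 x"
    unfolding f\<^sub>1_def f\<^sub>2_def using pos by (simp_all add: less_imp_le student_t_density_pos)
  have dist: "distributed M lborel (T (1, j)) (\<lambda>x. ennreal (f\<^sub>1 x))"
    "distributed M lborel (T (2, j)) (\<lambda>x. ennreal (f\<^sub>2 x))" if "j \<in> {1, 2}" for j
    unfolding f\<^sub>1_def f\<^sub>2_def using assms(5,6) that by auto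
  have mass: "integrable lborel f\<^sub>1" "integral\<^sup>L lborel f\<^sub>1 = 1"
    "integrable lborel f\<^sub>2" "integral\<^sup>L lborel f\<^sub>2 = 1"
    using distributed_density_integral_eq_1[OF dist(1) nonneg(1), of 1]
      distributed_density_integral_eq_1[OF dist(2) nonneg(2), of 1] by simp_all
  have sum_eq: "measure M {\<omega> \<in> space M. T i \<omega> + T j \<omega> \<le> h} = (LINT x|lborel. f x * cum_integral g (h - x))"
    if "i \<in> {1, 2} \<times> {1, 2}" "j \<in> {1, 2} \<times> {1, 2}" "i \<noteq> j"
      and "distributed M lborel (T i) (\<lambda>x. ennreal (f x))" "\<And>x. 0 \<le> f x"
      and "distributed M lborel (T j) (\<lambda>x. ennreal (g x))" "\<And>x. 0 \<le> g x" for i j f g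
    using that by (intro measure_indep_add_le indep_vars_imp_indep_var[OF assms(4)])
  have compare: "(LINT x|lborel. f x * cum_integral f\<^sub>1 (h - x)) \<le> (LINT x|lborel. f x * cum_integral f\<^sub>2 (h - x))"
    if "f \<in> {f\<^sub>1, f\<^sub>2}" for f
  proof -
    have "integrable lborel f" "\<And>x y. \<bar>x\<bar> \<le> \<bar>y\<bar> \<Longrightarrow> f y \<le> f x"
      using that mass pos by (auto simp: f\<^sub>1_def f\<^sub>2_def student_t_density_antimono)
    then show ?thesis
      using integral_mult_cum_integral_student_t_mono[OF assms(2,3)] mass assms(7)
      unfolding f\<^sub>1_def f\<^sub>2_def by simp
  qed
  have "measure M {\<omega> \<in> space M. T (1, 1) \<omega> + T (1, 2) \<omega> \<le> h}
      = (LINT x|lborel. f\<^sub>1 x * cum_integral f\<^sub>1 (h - x))"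
    by (intro sum_eq dist nonneg) auto
  also have "\<dots> \<le> (LINT x|lborel. f\<^sub>1 x * cum_integral f\<^sub>2 (h - x))"
    by (rule compare) simp
  also have "\<dots> = measure M {\<omega> \<in> space M. T (1, 1) \<omega> + T (2, 1) \<omega> \<le> h}"
    by (intro sum_eq[symmetric] dist nonneg) auto
  also have "\<dots> = measure M {\<omega> \<in> space M. T (2, 1) \<omega> + T (1, 1) \<omega> \<le> h}"
    by (simp add: add.commute)
  also have "\<dots> = (LINT x|lborel. f\<^sub>2 x * cum_integral f\<^sub>1 (h - x))"
    by (intro sum_eq dist nonneg) auto
  also have "\<dots> \<le> (LINT x|lborel. f\<^sub>2 x * cum_integral f\<^sub>2 (h - x))"
    by (rule compare) simp
  also have "\<dots> = measure M {\<omega> \<in> space M. T (2, 1) \<omega> + T (2, 2) \<omega> \<le> h}"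
    by (intro sum_eq[symmetric] dist nonneg) auto
  finally show ?thesis .
qed

end
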